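(* Let $\mathcal H$ be a separable complex Hilbert space, $A_1,A_2\in L(\mathcal H)^+$, $B\in L(\mathcal H)$ with closed range. The following are equivalent: (1) there exists $G\in L(\mathcal H)$ with $BG\in\Pi(A_1,R(B))$ and $I-GB\in\Pi(A_2,N(B))$; (2) the pairs $(A_1,R(B))$ and $(A_2,N(B))$ are compatible; (3) $B$ admits a weighted generalized inverse, i.e. there exists $C\in L(\mathcal H)$ with $BCB=B$, $CBC=C$, $A_1BC=(BC)^*A_1$, $A_2CB=(CB)^*A_2$.
   Context: For $A\in L(\mathcal H)^+$ and a closed subspace $\mathcal S$, $\|z\|_A=\langle Az,z\rangle^{1/2}$ and $\Pi(A,\mathcal S)$ is the set of $T\in L(\mathcal H)$ with $R(T)\subseteq\mathcal S$ and $\|y-Ty\|_A\le\|y-s\|_A$ for all $y\in\mathcal H$, $s\in\mathcal S$. The pair $(A,\mathcal S)$ is compatible if there exists $Q\in L(\mathcal H)$ with $Q^2=Q$, $R(Q)=\mathcal S$, $AQ=Q^*A$. $N(\cdot)$ denotes nullspace. *)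

theory Defs
  imports "HOL-Analysis.Analysis"
begin

text \<open>The distribution has no complex Hilbert spaces, so we introduce them as a type class.\<close>

class complex_inner_space = real_normed_vector +
  fixes cscale :: "complex \<Rightarrow> 'a \<Rightarrow> 'a"
    and cinner :: "'a \<Rightarrow> 'a \<Rightarrow> complex"
  assumes cscale_add_right: "cscale a (x + y) = cscale a x + cscale a y"
    and cscale_add_left: "cscale (a + b) x = cscale a x + cscale b x"
    and cscale_cscale: "cscale a (cscale b x) = cscale (a * b) x"
    and cscale_one: "cscale 1 x = x"
    and scaleR_cscale: "scaleR r x = cscale (complex_of_real r) x"
    and cinner_commute: "cinner x y = cnj (cinner y x)"
    and cinner_add_left: "cinner (x + y) z = cinner x z + cinner y z"
    and cinner_cscale_left: "cinner (cscale a x) y = a * cinner x y"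
    and norm_eq_sqrt_cinner: "norm x = sqrt (Re (cinner x x))"

class chilbert_space = complex_inner_space + complete_space

definition separable_space :: "'a::topological_space itself \<Rightarrow> bool" where
  "separable_space _ \<longleftrightarrow> (\<exists>D::'a set. countable D \<and> closure D = UNIV)"

definition bounded_op :: "('a::complex_inner_space \<Rightarrow> 'a) \<Rightarrow> bool" where
  "bounded_op T \<longleftrightarrow> (\<forall>x y. T (x + y) = T x + T y) \<and> (\<forall>c x. T (cscale c x) = cscale c (T x))
     \<and> (\<exists>K. \<forall>x. norm (T x) \<le> norm x * K)"

definition adj :: "('a::complex_inner_space \<Rightarrow> 'a) \<Rightarrow> ('a \<Rightarrow> 'a)" where
  "adj T = (THE S. \<forall>x y. cinner (T x) y = cinner x (S y))"

definition positive_op :: "('a::complex_inner_space \<Rightarrow> 'a) \<Rightarrow> bool" where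
  "positive_op A \<longleftrightarrow> bounded_op A \<and> (\<forall>x. Im (cinner (A x) x) = 0 \<and> 0 \<le> Re (cinner (A x) x))"

definition ker :: "('a::complex_inner_space \<Rightarrow> 'a) \<Rightarrow> 'a set" where
  "ker T = {x. T x = 0}"

definition Anorm :: "('a::complex_inner_space \<Rightarrow> 'a) \<Rightarrow> 'a \<Rightarrow> real" where
  "Anorm A z = sqrt (Re (cinner (A z) z))"

definition PiSet :: "('a::complex_inner_space \<Rightarrow> 'a) \<Rightarrow> 'a set \<Rightarrow> ('a \<Rightarrow> 'a) set" where
  "PiSet A S = {T. bounded_op T \<and> range T \<subseteq> S \<and>
      (\<forall>y s. s \<in> S \<longrightarrow> Anorm A (y - T y) \<le> Anorm A (y - s))}"

definition compatible :: "('a::complex_inner_space \<Rightarrow> 'a) \<Rightarrow> 'a set \<Rightarrow> bool" where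
  "compatible A S \<longleftrightarrow> (\<exists>Q. bounded_op Q \<and> Q \<circ> Q = Q \<and> range Q = S \<and> A \<circ> Q = adj Q \<circ> A)"

end

theory Submission
  imports Defs
begin

(*
  For positive A and a closed subspace S, an operator T with range in S is an A-best
  approximation iff every residual y - T y is A-orthogonal to S. For a bounded idempotent Q
  this orthogonality is exactly A Q = Q* A, so compatible idempotents are A-best
  approximations, and conversely, if T is one and P is the orthogonal projection onto S,
  then T + P - T P is an idempotent onto S with the same residuals, hence compatible.

  If B C B = B, then B C and I - C B are idempotents onto R(B) and N(B); this gives
  (3) => (1) and (2). For (2) => (3), take compatible idempotents Q1 onto R(B), Q2 onto N(B)
  and a bounded D with B D B = B, which exists by the open mapping theorem because R(B) is
  closed; then C = (I - Q2) D Q1 satisfies B C = Q1 and C B = I - Q2.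
*)

lemma cscale_zero_left [simp]: "cscale 0 x = 0"
  by (metis scaleR_cscale scaleR_zero_left of_real_0)

lemma cscale_zero_right [simp]: "cscale a 0 = 0"
  using cscale_add_right[of a 0 0] by simp

lemma cscale_minus_left: "cscale (- a) x = - cscale a x"
  by (metis cscale_add_left cscale_zero_left add.right_inverse add.commute eq_neg_iff_add_eq_0)

lemma cscale_minus_right: "cscale a (- x) = - cscale a x"
  by (metis cscale_add_right cscale_zero_right add.right_inverse add.commute eq_neg_iff_add_eq_0)

lemma cscale_diff_right: "cscale a (x - y) = cscale a x - cscale a y"
  using cscale_add_right[of a x "- y"] cscale_minus_right by simp

lemma cinner_add_right: "cinner x (y + z) = cinner x y + cinner x z"
  by (metis cinner_commute cinner_add_left complex_cnj_add)

lemma cinner_cscale_right: "cinner x (cscale a y) = cnj a * cinner x y"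
  by (metis cinner_commute cinner_cscale_left complex_cnj_mult)

lemma cinner_zero_left [simp]: "cinner 0 x = 0"
  using cinner_add_left[of 0 0 x] by simp

lemma cinner_zero_right [simp]: "cinner x 0 = 0"
  using cinner_add_right[of x 0 0] by simp

lemma cinner_diff_left: "cinner (x - y) z = cinner x z - cinner y z"
  by (metis cinner_add_left add_diff_cancel eq_diff_eq)

lemma cinner_diff_right: "cinner x (y - z) = cinner x y - cinner x z"
  by (metis cinner_add_right add_diff_cancel eq_diff_eq)

lemma cinner_minus_right: "cinner x (- y) = - cinner x y"
  using cinner_diff_right[of x 0 y] by simp

lemma cinner_scaleR_left: "cinner (scaleR r x) y = of_real r * cinner x y"
  by (simp add: scaleR_cscale cinner_cscale_left)

lemma cinner_self: "cinner x x = of_real ((norm x)\<^sup>2)"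
proof (rule complex_eqI)
  show "Im (cinner x x) = Im (of_real ((norm x)\<^sup>2))"
    using cinner_commute[of x x] by (metis Im_complex_of_real Reals_cnj_iff complex_is_Real_iff)
  have "0 \<le> Re (cinner x x)"
    using norm_eq_sqrt_cinner[of x] norm_ge_zero[of x] real_sqrt_ge_0_iff by metis
  then show "Re (cinner x x) = Re (of_real ((norm x)\<^sup>2))"
    using norm_eq_sqrt_cinner[of x] by (simp add: real_sqrt_pow2)
qed

lemma Re_cinner_self: "Re (cinner x x) = (norm x)\<^sup>2"
  by (simp add: cinner_self)

lemma cinner_self_eq_0 [simp]: "cinner x x = 0 \<longleftrightarrow> x = 0"
  by (simp add: cinner_self)

lemma cinner_eqI: "(\<And>z. cinner z x = cinner z y) \<Longrightarrow> x = y"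
  by (metis cinner_diff_right cinner_self_eq_0 eq_iff_diff_eq_0)

lemma Anorm_id: "Anorm (\<lambda>x. x) x = norm x"
  by (simp add: Anorm_def norm_eq_sqrt_cinner)

lemma norm_cinner_le: "cmod (cinner x y) \<le> norm x * norm y"
proof (cases "y = 0")
  case False
  define n where "n = (norm y)\<^sup>2"
  have n: "n > 0" using False by (simp add: n_def)
  define a where "a = cinner x y"
  define t where "t = a / of_real n"
  have "cinner (x - cscale t y) (x - cscale t y) = cinner x x - cnj t * a - t * cnj a + t * cnj t * of_real n"
    by (simp add: cinner_diff_left cinner_diff_right cinner_cscale_left cinner_cscale_right
        cinner_self[of y, folded n_def] cinner_commute[of y x] a_def[symmetric] algebra_simps)
  also have "\<dots> = cinner x x - a * cnj a / of_real n"
    using n by (simp add: t_def field_simps)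
  finally have "0 \<le> Re (cinner x x - a * cnj a / of_real n)"
    using Re_cinner_self[of "x - cscale t y"] by (metis zero_le_power2)
  then have "(cmod a)\<^sup>2 \<le> (norm x)\<^sup>2 * n"
    using n by (simp add: Re_cinner_self Re_divide_of_real complex_norm_square[symmetric] divide_le_eq)
  then have "(cmod a)\<^sup>2 \<le> (norm x * norm y)\<^sup>2" by (simp add: n_def power_mult_distrib)
  then show ?thesis unfolding a_def by (simp add: power2_le_iff_abs_le)
qed simp

lemma norm_add_sq: "(norm (x + y))\<^sup>2 = (norm x)\<^sup>2 + (norm y)\<^sup>2 + 2 * Re (cinner x y)"
proof -
  have "Re (cinner y x) = Re (cinner x y)" by (subst cinner_commute) simp
  then show ?thesis by (simp add: Re_cinner_self[symmetric] cinner_add_left cinner_add_right)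
qed

lemma parallelogram_law:
  fixes x y :: "'a::complex_inner_space"
  shows "(norm (x + y))\<^sup>2 + (norm (x - y))\<^sup>2 = 2 * (norm x)\<^sup>2 + 2 * (norm y)\<^sup>2"
  using norm_add_sq[of x y] norm_add_sq[of x "- y"] by (simp add: cinner_minus_right)

lemma norm_sq_orthogonal_sum:
  "cinner x y = 0 \<Longrightarrow> (norm (x + y))\<^sup>2 = (norm x)\<^sup>2 + (norm y)\<^sup>2"
  by (simp add: norm_add_sq)

lemma bounded_linear_cinner_left: "bounded_linear (\<lambda>x. cinner x y)"
  by (rule bounded_linear_intro[where K="norm y"])
    (simp_all add: cinner_add_left cinner_scaleR_left scaleR_conv_of_real norm_cinner_le)

instance chilbert_space \<subseteq> banach ..

definition csubspace :: "'a::complex_inner_space set \<Rightarrow> bool" where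
  "csubspace S \<longleftrightarrow> 0 \<in> S \<and> (\<forall>x\<in>S. \<forall>y\<in>S. x + y \<in> S) \<and> (\<forall>c. \<forall>x\<in>S. cscale c x \<in> S)"

lemma csubspace_0: "csubspace S \<Longrightarrow> 0 \<in> S"
  by (simp add: csubspace_def)

lemma csubspace_add: "csubspace S \<Longrightarrow> x \<in> S \<Longrightarrow> y \<in> S \<Longrightarrow> x + y \<in> S"
  by (simp add: csubspace_def)

lemma csubspace_cscale: "csubspace S \<Longrightarrow> x \<in> S \<Longrightarrow> cscale c x \<in> S"
  by (simp add: csubspace_def)

lemma csubspace_scaleR: "csubspace S \<Longrightarrow> x \<in> S \<Longrightarrow> scaleR r x \<in> S"
  by (simp add: scaleR_cscale csubspace_cscale)

lemma csubspace_diff: "csubspace S \<Longrightarrow> x \<in> S \<Longrightarrow> y \<in> S \<Longrightarrow> x - y \<in> S"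
  using csubspace_add[of S x "- y"] csubspace_cscale[of S y "- 1"]
  by (simp add: cscale_minus_left cscale_one)

lemma bounded_op_add: "bounded_op T \<Longrightarrow> T (x + y) = T x + T y"
  by (simp add: bounded_op_def)

lemma bounded_op_cscale: "bounded_op T \<Longrightarrow> T (cscale c x) = cscale c (T x)"
  by (simp add: bounded_op_def)

lemma bounded_op_bounded_linear: "bounded_op T \<Longrightarrow> bounded_linear T"
  unfolding bounded_op_def by (auto intro: bounded_linear_intro simp: scaleR_cscale)

lemma bounded_op_0: "bounded_op T \<Longrightarrow> T 0 = 0"
  by (metis bounded_op_bounded_linear bounded_linear.linear linear_0)

lemma bounded_op_diff: "bounded_op T \<Longrightarrow> T (x - y) = T x - T y"
  by (metis bounded_op_bounded_linear bounded_linear.linear linear_diff)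

lemma bounded_opI:
  assumes "\<And>x y. T (x + y) = T x + T y" "\<And>c x. T (cscale c x) = cscale c (T x)" "bounded_linear T"
  shows "bounded_op T"
  using assms bounded_linear.bounded[OF assms(3)] unfolding bounded_op_def by blast

lemma bounded_op_compose: "bounded_op S \<Longrightarrow> bounded_op T \<Longrightarrow> bounded_op (\<lambda>x. S (T x))"
  by (rule bounded_opI)
    (simp_all add: bounded_op_add bounded_op_cscale
      bounded_linear_compose[OF bounded_op_bounded_linear bounded_op_bounded_linear, unfolded o_def])

lemma bounded_op_ident: "bounded_op (\<lambda>x. x)"
  by (rule bounded_opI) (simp_all add: bounded_linear_ident)

lemma bounded_op_diff_fun: "bounded_op S \<Longrightarrow> bounded_op T \<Longrightarrow> bounded_op (\<lambda>x. S x - T x)"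
  by (rule bounded_opI)
    (simp_all add: bounded_op_add bounded_op_cscale cscale_diff_right bounded_linear_sub bounded_op_bounded_linear)

lemma bounded_op_add_fun: "bounded_op S \<Longrightarrow> bounded_op T \<Longrightarrow> bounded_op (\<lambda>x. S x + T x)"
  by (rule bounded_opI)
    (simp_all add: bounded_op_add bounded_op_cscale cscale_add_right bounded_linear_add bounded_op_bounded_linear)

lemma csubspace_range:
  assumes "bounded_op T"
  shows "csubspace (range T)"
proof -
  have "0 \<in> range T" using bounded_op_0[OF assms] by (metis rangeI)
  then show ?thesis
    unfolding csubspace_def
    by (auto simp: bounded_op_add[OF assms, symmetric] bounded_op_cscale[OF assms, symmetric])
qed

lemma csubspace_ker: "bounded_op T \<Longrightarrow> csubspace (ker T)"
  unfolding csubspace_def ker_def by (simp add: bounded_op_add bounded_op_cscale bounded_op_0)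

lemma closed_ker: "bounded_op T \<Longrightarrow> closed (ker T)"
  unfolding ker_def
  by (intro closed_Collect_eq continuous_on_const linear_continuous_on bounded_op_bounded_linear)

lemma idempotent_fixes_range: "Q \<circ> Q = Q \<Longrightarrow> s \<in> range Q \<Longrightarrow> Q s = s"
  by (metis comp_apply rangeE)

lemma idempotent_onto:
  assumes "\<And>x. Q x \<in> S" and "\<And>s. s \<in> S \<Longrightarrow> Q s = s"
  shows "Q \<circ> Q = Q" "range Q = S"
  using assms by (auto simp: fun_eq_iff) (metis rangeI)

section \<open>Positive operators and \<open>A\<close>-orthogonality\<close>

lemma positive_op_hermitian:
  assumes "positive_op A"
  shows "cinner (A x) y = cinner x (A y)"
proof -
  have bA: "bounded_op A" and im: "\<And>z. Im (cinner (A z) z) = 0"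
    using assms by (auto simp: positive_op_def)
  define p where "p = cinner (A x) y"
  define q where "q = cinner (A y) x"
  have "cinner (A (x + y)) (x + y) = cinner (A x) x + cinner (A y) y + p + q"
    by (simp add: bounded_op_add[OF bA] cinner_add_left cinner_add_right p_def q_def)
  then have "Im p + Im q = 0" using im[of "x + y"] im[of x] im[of y] by simp
  moreover have "cinner (A (x + cscale \<i> y)) (x + cscale \<i> y) = cinner (A x) x + cinner (A y) y - \<i> * p + \<i> * q"
    by (simp add: bounded_op_add[OF bA] bounded_op_cscale[OF bA] cinner_add_left cinner_add_right
        cinner_cscale_left cinner_cscale_right p_def q_def algebra_simps)
  then have "Re q - Re p = 0" using im[of "x + cscale \<i> y"] im[of x] im[of y] by simp
  ultimately have "q = cnj p" by (simp add: complex_eq_iff)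
  then show ?thesis unfolding p_def q_def by (metis cinner_commute complex_cnj_cnj)
qed

lemma positive_op_Re_nonneg: "positive_op A \<Longrightarrow> 0 \<le> Re (cinner (A x) x)"
  by (simp add: positive_op_def)

lemma Re_cinner_positive_op_add:
  assumes A: "positive_op A"
  shows "Re (cinner (A (u + w)) (u + w))
    = Re (cinner (A u) u) + Re (cinner (A w) w) + 2 * Re (cinner (A u) w)"
proof -
  have "cinner (A w) u = cnj (cinner (A u) w)"
    using positive_op_hermitian[OF A, of w u] cinner_commute[of w "A u"] by simp
  then show ?thesis
    using A by (simp add: positive_op_def bounded_op_add cinner_add_left cinner_add_right)
qed

lemma linear_le_quadratic_imp_zero:
  fixes a b :: real
  assumes "\<And>t. 2 * t * a \<le> t\<^sup>2 * b"
  shows "a = 0"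
proof (rule ccontr)
  assume "a \<noteq> 0"
  define c where "c = \<bar>b\<bar> + 1"
  have c: "c > 0" by (simp add: c_def)
  have "2 * (a / c) * a \<le> (a / c)\<^sup>2 * b" by (rule assms)
  then have "2 * a\<^sup>2 * c \<le> a\<^sup>2 * b"
    using c by (simp add: power2_eq_square field_simps)
  moreover have "a\<^sup>2 * b < a\<^sup>2 * (2 * c)"
    using \<open>a \<noteq> 0\<close> by (intro mult_strict_left_mono) (auto simp: c_def)
  ultimately show False by linarith
qed

lemma Anorm_minimal_iff_orthogonal:
  assumes A: "positive_op A" and S: "csubspace S"
  shows "(\<forall>s\<in>S. Anorm A u \<le> Anorm A (u - s)) \<longleftrightarrow> (\<forall>s\<in>S. cinner (A u) s = 0)"
proof
  assume min: "\<forall>s\<in>S. Anorm A u \<le> Anorm A (u - s)"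
  have Re0: "Re (cinner (A u) s) = 0" if s: "s \<in> S" for s
  proof (rule linear_le_quadratic_imp_zero)
    fix t :: real
    have "Anorm A u \<le> Anorm A (u + scaleR (- t) s)"
      using min csubspace_scaleR[OF S s, of t] by (simp add: scaleR_cscale cscale_minus_left)
    then have "Re (cinner (A u) u) \<le> Re (cinner (A (u + scaleR (- t) s)) (u + scaleR (- t) s))"
      unfolding Anorm_def by simp
    then show "2 * t * Re (cinner (A u) s) \<le> t\<^sup>2 * Re (cinner (A s) s)"
      using A
      by (simp add: Re_cinner_positive_op_add positive_op_def bounded_op_cscale scaleR_cscale
          cinner_cscale_left cinner_cscale_right power2_eq_square)
  qed
  show "\<forall>s\<in>S. cinner (A u) s = 0"
  proof
    fix s assume s: "s \<in> S"
    have "Re (cinner (A u) (cscale \<i> s)) = 0" by (rule Re0[OF csubspace_cscale[OF S s]])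
    then show "cinner (A u) s = 0" using Re0[OF s] by (simp add: cinner_cscale_right complex_eq_iff)
  qed
next
  assume orth: "\<forall>s\<in>S. cinner (A u) s = 0"
  show "\<forall>s\<in>S. Anorm A u \<le> Anorm A (u - s)"
  proof
    fix s assume "s \<in> S"
    then have "- s \<in> S" using csubspace_diff[OF S csubspace_0[OF S]] by fastforce
    then have "Re (cinner (A u) u) \<le> Re (cinner (A (u - s)) (u - s))"
      using orth positive_op_Re_nonneg[OF A, of "- s"] Re_cinner_positive_op_add[OF A, of u "- s"] by simp
    then show "Anorm A u \<le> Anorm A (u - s)" unfolding Anorm_def by simp
  qed
qed

section \<open>Orthogonal projections onto closed subspaces\<close>

lemma positive_op_ident: "positive_op (\<lambda>x::'a::complex_inner_space. x)"
  by (simp add: positive_op_def bounded_op_ident cinner_self)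

lemma minimizing_sequence_Cauchy:
  fixes x :: "'a::complex_inner_space"
  assumes S: "csubspace S" and inS: "\<And>n. p n \<in> S"
    and inf: "\<And>s. s \<in> S \<Longrightarrow> d \<le> (norm (x - s))\<^sup>2"
    and approx: "\<And>n. (norm (x - p n))\<^sup>2 < d + inverse (real (Suc n))"
  shows "Cauchy p"
proof (rule metric_CauchyI)
  have dist_sq: "(norm (p m - p n))\<^sup>2 \<le> 2 * inverse (real (Suc m)) + 2 * inverse (real (Suc n))" for m n
  proof -
    define a where "a = x - p m"
    define b where "b = x - p n"
    have "scaleR (1/2) (p m + p n) \<in> S" using S inS csubspace_add csubspace_scaleR by blast
    moreover have "a + b = scaleR 2 (x - scaleR (1/2) (p m + p n))"
      by (simp add: a_def b_def algebra_simps scaleR_2)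
    ultimately have "4 * d \<le> (norm (a + b))\<^sup>2"
      using inf by (simp add: power_mult_distrib)
    moreover have "(norm (p m - p n))\<^sup>2 = 2 * (norm a)\<^sup>2 + 2 * (norm b)\<^sup>2 - (norm (a + b))\<^sup>2"
      using parallelogram_law[of a b] by (simp add: a_def b_def norm_minus_commute)
    ultimately show ?thesis using approx[of m] approx[of n] unfolding a_def b_def by linarith
  qed
  fix e :: real assume e: "e > 0"
  obtain M where "real M > 4 / e\<^sup>2" using reals_Archimedean2 by blast
  then have M: "real (Suc M) > 4 / e\<^sup>2" by simp
  have "inverse (real (Suc M)) < inverse (4 / e\<^sup>2)" using M e by (intro less_imp_inverse_less) auto
  then have small: "inverse (real (Suc M)) < e\<^sup>2 / 4" by simp
  show "\<exists>M. \<forall>m\<ge>M. \<forall>n\<ge>M. dist (p m) (p n) < e"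
  proof (intro exI allI impI)
    fix m n assume "M \<le> m" "M \<le> n"
    then have "inverse (real (Suc m)) \<le> inverse (real (Suc M))" "inverse (real (Suc n)) \<le> inverse (real (Suc M))"
      by (auto intro: le_imp_inverse_le)
    then have "(norm (p m - p n))\<^sup>2 < e\<^sup>2" using dist_sq[of m n] small by linarith
    then show "dist (p m) (p n) < e" using e by (simp add: dist_norm power_less_imp_less_base)
  qed
qed

lemma closest_point_exists:
  fixes S :: "'a::chilbert_space set"
  assumes cl: "closed S" and S: "csubspace S"
  shows "\<exists>p\<in>S. \<forall>s\<in>S. norm (x - p) \<le> norm (x - s)"
proof -
  define d where "d = Inf ((\<lambda>s. (norm (x - s))\<^sup>2) ` S)"
  have d_le: "d \<le> (norm (x - s))\<^sup>2" if "s \<in> S" for s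
    unfolding d_def using that by (intro cInf_lower imageI) (auto intro!: bdd_belowI[where m=0])
  have "\<exists>s\<in>S. (norm (x - s))\<^sup>2 < d + inverse (real (Suc n))" for n
    using cInf_lessD[of "(\<lambda>s. (norm (x - s))\<^sup>2) ` S" "d + inverse (real (Suc n))"] csubspace_0[OF S]
    unfolding d_def by auto
  then obtain p where inS: "\<And>n. p n \<in> S" and approx: "\<And>n. (norm (x - p n))\<^sup>2 < d + inverse (real (Suc n))"
    by metis
  obtain q where lim: "p \<longlonglongrightarrow> q"
    using minimizing_sequence_Cauchy[OF S inS d_le approx] convergent_eq_Cauchy by blast
  have "norm (x - q) \<le> norm (x - s)" if s: "s \<in> S" for s
  proof -
    have "(norm (x - q))\<^sup>2 \<le> (norm (x - s))\<^sup>2 + 0"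
    proof (rule LIMSEQ_le)
      show "(\<lambda>n. (norm (x - p n))\<^sup>2) \<longlonglongrightarrow> (norm (x - q))\<^sup>2" by (intro tendsto_intros lim)
      show "(\<lambda>n. (norm (x - s))\<^sup>2 + inverse (real (Suc n))) \<longlonglongrightarrow> (norm (x - s))\<^sup>2 + 0"
        by (intro tendsto_intros LIMSEQ_inverse_real_of_nat)
      show "\<exists>N. \<forall>n\<ge>N. (norm (x - p n))\<^sup>2 \<le> (norm (x - s))\<^sup>2 + inverse (real (Suc n))"
        using approx d_le[OF s] less_imp_le add_le_cancel_right order_trans by meson
    qed
    then show ?thesis by (simp add: power2_le_iff_abs_le)
  qed
  moreover have "q \<in> S" using closed_sequentially[OF cl inS lim] .
  ultimately show ?thesis by blast
qed

lemma orthogonal_decomposition_exists: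
  fixes S :: "'a::chilbert_space set"
  assumes cl: "closed S" and S: "csubspace S"
  shows "\<exists>p\<in>S. \<forall>s\<in>S. cinner (x - p) s = 0"
proof -
  obtain p where p: "p \<in> S" and closest: "\<And>s. s \<in> S \<Longrightarrow> norm (x - p) \<le> norm (x - s)"
    using closest_point_exists[OF cl S] by blast
  have "\<forall>s\<in>S. Anorm (\<lambda>x. x) (x - p) \<le> Anorm (\<lambda>x. x) (x - p - s)"
    using closest csubspace_add[OF S p] by (simp add: Anorm_id diff_diff_eq)
  then show ?thesis
    using p Anorm_minimal_iff_orthogonal[OF positive_op_ident S] by blast
qed

definition proj :: "'a::complex_inner_space set \<Rightarrow> 'a \<Rightarrow> 'a" where
  "proj S x = (SOME p. p \<in> S \<and> (\<forall>s\<in>S. cinner (x - p) s = 0))"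

context
  fixes S :: "'a::chilbert_space set"
  assumes cl: "closed S" and S: "csubspace S"
begin

lemma proj_in: "proj S x \<in> S"
  and proj_orthogonal: "s \<in> S \<Longrightarrow> cinner (x - proj S x) s = 0"
  using someI_ex[OF orthogonal_decomposition_exists[OF cl S, of x, unfolded Bex_def]]
  unfolding proj_def by auto

lemma proj_unique:
  assumes p: "p \<in> S" "\<And>s. s \<in> S \<Longrightarrow> cinner (x - p) s = 0"
  shows "proj S x = p"
proof -
  have d: "p - proj S x \<in> S" using csubspace_diff[OF S p(1) proj_in] .
  have "cinner (p - proj S x) (p - proj S x)
      = cinner (x - proj S x) (p - proj S x) - cinner (x - p) (p - proj S x)"
    by (simp add: cinner_diff_left)
  also have "\<dots> = 0" using proj_orthogonal[OF d] p(2)[OF d] by simp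
  finally show ?thesis by simp
qed

lemma proj_fixes: "s \<in> S \<Longrightarrow> proj S s = s"
  using proj_unique by simp

lemma norm_sq_proj: "(norm x)\<^sup>2 = (norm (proj S x))\<^sup>2 + (norm (x - proj S x))\<^sup>2"
proof -
  have "cinner (proj S x) (x - proj S x) = 0"
    using proj_orthogonal[OF proj_in, of x] cinner_commute[of "proj S x" "x - proj S x"] by simp
  then show ?thesis using norm_sq_orthogonal_sum[of "proj S x" "x - proj S x"] by simp
qed

lemma norm_proj_le: "norm (proj S x) \<le> norm x"
  and norm_diff_proj_le: "norm (x - proj S x) \<le> norm x"
  using norm_sq_proj[of x] by (simp_all add: power2_le_imp_le)

lemma bounded_op_proj: "bounded_op (proj S)"
proof -
  have "proj S (x + y) = proj S x + proj S y" for x y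
  proof (rule proj_unique)
    show "proj S x + proj S y \<in> S" by (rule csubspace_add[OF S proj_in proj_in])
    fix s assume "s \<in> S"
    have "x + y - (proj S x + proj S y) = (x - proj S x) + (y - proj S y)" by simp
    then show "cinner (x + y - (proj S x + proj S y)) s = 0"
      by (simp only: cinner_add_left proj_orthogonal[OF \<open>s \<in> S\<close>]) simp
  qed
  moreover have "proj S (cscale c x) = cscale c (proj S x)" for c x
    by (rule proj_unique)
      (simp_all add: csubspace_cscale[OF S] proj_in cscale_diff_right[symmetric] cinner_cscale_left proj_orthogonal)
  ultimately show ?thesis
    unfolding bounded_op_def using norm_proj_le by (metis mult.right_neutral)
qed

end

section \<open>Riesz representation and adjoints\<close>

lemma riesz_representation:
  fixes f :: "'a::chilbert_space \<Rightarrow> complex"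
  assumes add: "\<And>x y. f (x + y) = f x + f y" and sc: "\<And>c x. f (cscale c x) = c * f x"
    and cont: "continuous_on UNIV f"
  shows "\<exists>z. \<forall>x. f x = cinner x z"
proof (cases "\<forall>x. f x = 0")
  case True
  then show ?thesis by (intro exI[of _ 0]) simp
next
  case False
  then obtain x0 where x0: "f x0 \<noteq> 0" by blast
  define K where "K = {x. f x = 0}"
  have f0: "f 0 = 0" using sc[of 0 0] by simp
  have fdiff: "f (x - y) = f x - f y" for x y
    using add[of "x - y" y] by simp
  have clK: "closed K" unfolding K_def by (intro closed_Collect_eq cont continuous_on_const)
  have sK: "csubspace K" unfolding K_def csubspace_def using f0 add sc by auto
  define w where "w = x0 - proj K x0"
  have fw: "f w = f x0" using proj_in[OF clK sK, of x0] by (simp add: w_def fdiff K_def)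
  have w0: "cinner w w \<noteq> 0" using fw x0 f0 by auto
  have "f x = cinner x (cscale (cnj (f w / cinner w w)) w)" for x
  proof -
    define c where "c = f x / f w"
    have "f (x - cscale c w) = 0" using x0 fw by (simp add: fdiff sc c_def)
    then have "cinner w (x - cscale c w) = 0"
      using proj_orthogonal[OF clK sK] unfolding w_def K_def by blast
    then have "cinner (x - cscale c w) w = 0" using cinner_commute[of "x - cscale c w" w] by simp
    then have "cinner x w = c * cinner w w" by (simp add: cinner_diff_left cinner_cscale_left)
    then show ?thesis using w0 x0 fw by (simp add: cinner_cscale_right c_def)
  qed
  then show ?thesis by blast
qed

lemma adj_eqI:
  assumes "\<And>x y. cinner (T x) y = cinner x (S y)"
  shows "adj T = S"
  unfolding adj_def
proof (rule the_equality)
  fix S' assume "\<forall>x y. cinner (T x) y = cinner x (S' y)"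
  then have "cinner x (S' y) = cinner x (S y)" for x y using assms by metis
  then show "S' = S" by (intro ext cinner_eqI)
qed (use assms in blast)

lemma cinner_adj:
  fixes T :: "'a::chilbert_space \<Rightarrow> 'a"
  assumes T: "bounded_op T"
  shows "cinner (T x) y = cinner x (adj T y)"
proof -
  have "\<exists>z. \<forall>x. cinner (T x) y = cinner x z" for y
  proof (rule riesz_representation)
    have "bounded_linear (\<lambda>x. cinner (T x) y)"
      using bounded_linear_compose[OF bounded_linear_cinner_left bounded_op_bounded_linear[OF T]]
      by (simp add: o_def)
    then show "continuous_on UNIV (\<lambda>x. cinner (T x) y)" by (simp add: linear_continuous_on)
  qed (simp_all add: bounded_op_add[OF T] bounded_op_cscale[OF T] cinner_add_left cinner_cscale_left)
  then obtain S where S: "\<And>x y. cinner (T x) y = cinner x (S y)" by metis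
  then show ?thesis using adj_eqI[OF S] by simp
qed

lemma adj_commute_iff:
  fixes Q :: "'a::chilbert_space \<Rightarrow> 'a"
  assumes Q: "bounded_op Q"
  shows "A \<circ> Q = adj Q \<circ> A \<longleftrightarrow> (\<forall>x z. cinner z (A (Q x)) = cinner (Q z) (A x))"
proof -
  have "A (Q x) = adj Q (A x) \<longleftrightarrow> (\<forall>z. cinner z (A (Q x)) = cinner (Q z) (A x))" for x
    using cinner_eqI[of "A (Q x)" "adj Q (A x)"] by (auto simp: cinner_adj[OF Q])
  then show ?thesis by (simp add: fun_eq_iff)
qed

section \<open>The open mapping theorem\<close>

lemma Baire_closure_image_ball:
  fixes f :: "'a::banach \<Rightarrow> 'b::banach"
  assumes "surj f"
  shows "\<exists>m::nat. interior (closure (f ` ball 0 (real (Suc m)))) \<noteq> {}"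
proof (rule ccontr)
  assume "\<not> ?thesis"
  then have empty: "\<And>m. interior (closure (f ` ball 0 (real (Suc m)))) = {}" by blast
  define G where "G = range (\<lambda>m. closure (f ` ball 0 (real (Suc m))))"
  have "euclidean interior_of \<Union>G = {}"
  proof (rule Baire_category_alt)
    show "completely_metrizable_space (euclidean :: 'b topology) \<or>
          locally_compact_space (euclidean :: 'b topology) \<and> regular_space (euclidean :: 'b topology)"
      using completely_metrizable_space_euclidean by blast
    show "countable G" unfolding G_def by simp
    show "closedin euclidean T \<and> euclidean interior_of T = {}" if "T \<in> G" for T
    proof -
      obtain m where T: "T = closure (f ` ball 0 (real (Suc m)))" using \<open>T \<in> G\<close> unfolding G_def by blast
      show ?thesis unfolding T closed_closedin[symmetric] euclidean_interior_of using empty by simp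
    qed
  qed
  moreover have "y \<in> \<Union>G" for y
  proof -
    obtain x where x: "y = f x" using surjD[OF assms] by blast
    obtain m :: nat where "norm x < real m" using reals_Archimedean2 by blast
    then have "y \<in> closure (f ` ball 0 (real (Suc m)))"
      unfolding x by (intro subsetD[OF closure_subset] imageI) simp
    then show ?thesis unfolding G_def by blast
  qed
  then have "\<Union>G = UNIV" by blast
  ultimately show False by simp
qed

lemma open_mapping_approximate:
  fixes f :: "'a::banach \<Rightarrow> 'b::banach"
  assumes bl: "bounded_linear f" and surj: "surj f"
  shows "\<exists>k>0. \<forall>y e. e > 0 \<longrightarrow> (\<exists>x. norm x \<le> k * norm y \<and> norm (f x - y) < e)"
proof -
  interpret f: bounded_linear f by (rule bl)
  obtain m where m: "interior (closure (f ` ball 0 (real (Suc m)))) \<noteq> {}"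
    using Baire_closure_image_ball[OF surj] by blast
  define M where "M = real (Suc m)"
  from m obtain y0 where "y0 \<in> interior (closure (f ` ball 0 M))" unfolding M_def by blast
  then obtain r where r: "r > 0" and br: "ball y0 r \<subseteq> closure (f ` ball 0 M)"
    using mem_interior by blast
  have M: "M > 0" by (simp add: M_def)
  text \<open>A small \<open>y\<close> is approximately \<open>f a - f b\<close>, where \<open>f a \<approx> y0 + y\<close> and \<open>f b \<approx> y0\<close>.\<close>
  have small: "\<exists>x. norm x < 2 * M \<and> norm (f x - y) < e" if y: "norm y < r" and e: "e > 0" for y e
  proof -
    have "y0 + y \<in> closure (f ` ball 0 M)" "y0 \<in> closure (f ` ball 0 M)"
      using br y r by (auto simp: dist_norm)
    then obtain a b where a: "a \<in> ball 0 M" "dist (f a) (y0 + y) < e / 2"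
      and b: "b \<in> ball 0 M" "dist (f b) y0 < e / 2"
      using e by (auto simp: closure_approachable dest!: spec[of _ "e / 2"])
    have "norm (f (a - b) - y) \<le> norm (f a - (y0 + y)) + norm (f b - y0)"
      using norm_triangle_ineq4[of "f a - (y0 + y)" "f b - y0"] by (simp add: f.diff algebra_simps)
    moreover have "norm (a - b) < 2 * M" using a(1) b(1) norm_triangle_ineq4[of a b] by simp
    ultimately show ?thesis using a(2) b(2) by (intro exI[of _ "a - b"]) (simp add: dist_norm)
  qed
  have "\<exists>x. norm x \<le> (4 * M / r) * norm y \<and> norm (f x - y) < e" if e: "e > 0" for y e
  proof (cases "y = 0")
    case True
    then show ?thesis using e by (intro exI[of _ 0]) simp
  next
    case False
    define t where "t = r / (2 * norm y)"
    have t: "t > 0" using False r by (simp add: t_def)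
    have "norm (scaleR t y) < r" using False r by (simp add: t_def)
    then obtain x where x: "norm x < 2 * M" "norm (f x - scaleR t y) < e * t"
      using small[of "scaleR t y" "e * t"] t e by auto
    have bound: "norm (scaleR (inverse t) x) \<le> (4 * M / r) * norm y"
      using x(1) t False r by (simp add: t_def field_simps)
    have "f (scaleR (inverse t) x) - y = scaleR (inverse t) (f x - scaleR t y)"
      using t by (simp add: f.scaleR algebra_simps)
    then have "norm (f (scaleR (inverse t) x) - y) = inverse t * norm (f x - scaleR t y)"
      using t by simp
    also have "\<dots> < inverse t * (e * t)" using x(2) t by simp
    also have "\<dots> = e" using t by simp
    finally show ?thesis using bound by blast
  qed
  moreover have "4 * M / r > 0" using M r by simp
  ultimately show ?thesis by blast
qed

text \<open>The classical iteration: correct the residual \<open>y - f (x\<^sub>0 + \<dots> + x\<^sub>j)\<close> at each step,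
  halving its norm, and sum the geometric series of corrections.\<close>

lemma approximate_preimage_imp_preimage:
  fixes f :: "'a::banach \<Rightarrow> 'b::real_normed_vector"
  assumes bl: "bounded_linear f"
    and approx: "\<And>y e. e > 0 \<Longrightarrow> \<exists>x. norm x \<le> k * norm y \<and> norm (f x - y) < e"
  shows "\<exists>x. f x = y \<and> norm x \<le> 2 * k * norm y"
proof (cases "y = 0")
  case True
  then show ?thesis using bl by (intro exI[of _ 0]) (simp add: linear_simps)
next
  case False
  interpret f: bounded_linear f by (rule bl)
  define g where "g y e = (SOME x. norm x \<le> k * norm y \<and> norm (f x - y) < e)" for y e
  have g: "norm (g y e) \<le> k * norm y \<and> norm (f (g y e) - y) < e" if "e > 0" for y e
    unfolding g_def using someI_ex[OF approx[OF that]] .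
  define eps where "eps j = norm y / 2 ^ Suc j" for j :: nat
  have eps: "eps j > 0" for j using False by (simp add: eps_def)
  define ys where "ys = rec_nat y (\<lambda>j v. v - f (g v (eps j)))"
  define xs where "xs j = g (ys j) (eps j)" for j
  have ys0: "ys 0 = y" by (simp add: ys_def)
  have ysS: "ys (Suc j) = ys j - f (xs j)" for j by (simp add: ys_def xs_def)
  have ys_le: "norm (ys j) \<le> norm y * (1/2) ^ j" for j
  proof (cases j)
    case (Suc i)
    have "norm (ys (Suc i)) < eps i"
      using g[OF eps[of i], of "ys i"] by (simp add: ysS xs_def norm_minus_commute)
    then show ?thesis by (simp add: Suc eps_def power_one_over)
  qed (simp add: ys0)
  have "0 \<le> k * norm y" using g[OF eps[of 0], of y] norm_ge_zero order_trans by blast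
  then have k: "k \<ge> 0" using False by (simp add: zero_le_mult_iff)
  have xs_le: "norm (xs j) \<le> k * norm y * (1/2) ^ j" for j
  proof -
    have "norm (xs j) \<le> k * norm (ys j)" using g[OF eps[of j], of "ys j"] by (simp add: xs_def)
    also have "\<dots> \<le> k * (norm y * (1/2) ^ j)" by (rule mult_left_mono[OF ys_le k])
    finally show ?thesis by (simp add: mult.assoc)
  qed
  have sg: "summable (\<lambda>j. k * norm y * (1/2::real) ^ j)"
    by (intro summable_mult summable_geometric) simp
  have sn: "summable (\<lambda>j. norm (xs j))"
    by (rule summable_comparison_test[OF _ sg]) (use xs_le in simp)
  have "ys \<longlonglongrightarrow> 0"
  proof (rule tendsto_norm_zero_cancel, rule Lim_null_comparison)
    show "\<forall>\<^sub>F j in sequentially. norm (norm (ys j)) \<le> norm y * (1/2) ^ j"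
      using ys_le by simp
    show "(\<lambda>j. norm y * (1/2::real) ^ j) \<longlonglongrightarrow> 0"
      using tendsto_mult_right_zero[OF LIMSEQ_power_zero[of "1/2::real"]] by simp
  qed
  then have "(\<lambda>n. y - ys n) \<longlonglongrightarrow> y" using tendsto_diff[OF tendsto_const] by fastforce
  moreover have "(\<Sum>j<n. f (xs j)) = y - ys n" for n
    by (induction n) (simp_all add: ys0 ysS)
  ultimately have "(\<lambda>j. f (xs j)) sums y" unfolding sums_def by simp
  then have "f (suminf xs) = y"
    using f.suminf[OF summable_norm_cancel[OF sn]] sums_unique by metis
  moreover have "norm (suminf xs) \<le> (\<Sum>j. k * norm y * (1/2::real) ^ j)"
    using summable_norm[OF sn] suminf_le[OF xs_le sn sg] by (rule order_trans)
  moreover have "(\<Sum>j. k * norm y * (1/2::real) ^ j) = 2 * k * norm y"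
    using suminf_mult[of "\<lambda>j. (1/2::real) ^ j" "k * norm y"] suminf_geometric[of "1/2::real"] by simp
  ultimately show ?thesis by (intro exI[of _ "suminf xs"]) simp
qed

lemma open_mapping_theorem:
  fixes f :: "'a::banach \<Rightarrow> 'b::banach"
  assumes "bounded_linear f" and "surj f"
  shows "\<exists>c>0. \<forall>y. \<exists>x. f x = y \<and> norm x \<le> c * norm y"
proof -
  obtain k where "k > 0" and "\<And>y e. e > 0 \<Longrightarrow> \<exists>x. norm x \<le> k * norm y \<and> norm (f x - y) < e"
    using open_mapping_approximate[OF assms] by blast
  then show ?thesis using approximate_preimage_imp_preimage[OF assms(1)] by (intro exI[of _ "2 * k"]) auto
qed

section \<open>Best approximation and compatibility\<close>

lemma PiSet_iff_orthogonal:
  assumes A: "positive_op A" and S: "csubspace S"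
  shows "T \<in> PiSet A S \<longleftrightarrow>
    bounded_op T \<and> range T \<subseteq> S \<and> (\<forall>y. \<forall>s\<in>S. cinner (A (y - T y)) s = 0)"
proof -
  have shift: "(\<forall>s\<in>S. Anorm A (y - T y) \<le> Anorm A (y - s))
      \<longleftrightarrow> (\<forall>s\<in>S. Anorm A (y - T y) \<le> Anorm A (y - T y - s))" if "T y \<in> S" for y
  proof
    assume "\<forall>s\<in>S. Anorm A (y - T y) \<le> Anorm A (y - s)"
    then show "\<forall>s\<in>S. Anorm A (y - T y) \<le> Anorm A (y - T y - s)"
      using csubspace_add[OF S that] by (simp add: diff_diff_eq)
  next
    assume "\<forall>s\<in>S. Anorm A (y - T y) \<le> Anorm A (y - T y - s)"
    show "\<forall>s\<in>S. Anorm A (y - T y) \<le> Anorm A (y - s)"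
    proof
      fix s assume "s \<in> S"
      then have "Anorm A (y - T y) \<le> Anorm A (y - T y - (s - T y))"
        using \<open>\<forall>s\<in>S. _\<close> csubspace_diff[OF S _ that] by blast
      then show "Anorm A (y - T y) \<le> Anorm A (y - s)" by simp
    qed
  qed
  have "(\<forall>s\<in>S. Anorm A (y - T y) \<le> Anorm A (y - s)) \<longleftrightarrow> (\<forall>s\<in>S. cinner (A (y - T y)) s = 0)"
    if "T y \<in> S" for y
    using shift[OF that] Anorm_minimal_iff_orthogonal[OF A S, of "y - T y"] by (simp only:)
  then show ?thesis unfolding PiSet_def by (auto simp: image_subset_iff)
qed

lemma adj_commute_iff_orthogonal:
  fixes Q :: "'a::chilbert_space \<Rightarrow> 'a"
  assumes A: "positive_op A" and Q: "bounded_op Q" and idem: "Q \<circ> Q = Q"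
  shows "A \<circ> Q = adj Q \<circ> A \<longleftrightarrow> (\<forall>y. \<forall>s\<in>range Q. cinner (A (y - Q y)) s = 0)"
proof
  have bA: "bounded_op A" using A by (simp add: positive_op_def)
  assume "A \<circ> Q = adj Q \<circ> A"
  then have comm: "cinner z (A (Q x)) = cinner (Q z) (A x)" for x z
    using adj_commute_iff[OF Q] by blast
  show "\<forall>y. \<forall>s\<in>range Q. cinner (A (y - Q y)) s = 0"
  proof (intro allI ballI)
    fix y s assume "s \<in> range Q"
    then have "Q s = s" by (rule idempotent_fixes_range[OF idem])
    then have "cinner s (A (Q y)) = cinner s (A y)" using comm[of s y] by simp
    then have "cinner s (A (y - Q y)) = 0"
      by (simp add: bounded_op_diff[OF bA] cinner_diff_right)
    then show "cinner (A (y - Q y)) s = 0" using cinner_commute[of "A (y - Q y)" s] by simp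
  qed
next
  have bA: "bounded_op A" using A by (simp add: positive_op_def)
  assume orth: "\<forall>y. \<forall>s\<in>range Q. cinner (A (y - Q y)) s = 0"
  have "cinner z (A (Q x)) = cinner (Q z) (A x)" for x z
  proof -
    have "cinner (z - Q z) (A (Q x)) = 0"
      using positive_op_hermitian[OF A, of "z - Q z" "Q x"] orth[rule_format, OF rangeI, of z x] by simp
    moreover have "cinner (Q z) (A (x - Q x)) = 0"
      using orth[rule_format, OF rangeI, of x z] cinner_commute[of "Q z" "A (x - Q x)"] by simp
    ultimately show ?thesis
      by (simp add: bounded_op_diff[OF bA] cinner_diff_left cinner_diff_right)
  qed
  then show "A \<circ> Q = adj Q \<circ> A" using adj_commute_iff[OF Q] by blast
qed

lemma idempotent_PiSet_iff_adj_commute: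
  fixes Q :: "'a::chilbert_space \<Rightarrow> 'a"
  assumes A: "positive_op A" and Q: "bounded_op Q" and idem: "Q \<circ> Q = Q"
  shows "Q \<in> PiSet A (range Q) \<longleftrightarrow> A \<circ> Q = adj Q \<circ> A"
  by (simp add: PiSet_iff_orthogonal[OF A csubspace_range[OF Q]] adj_commute_iff_orthogonal[OF A Q idem] Q)

lemma adj_commute_complement:
  fixes Q :: "'a::chilbert_space \<Rightarrow> 'a"
  assumes A: "bounded_op A" and Q: "bounded_op Q" and comm: "A \<circ> Q = adj Q \<circ> A"
  shows "A \<circ> (\<lambda>x. x - Q x) = adj (\<lambda>x. x - Q x) \<circ> A"
proof -
  have "cinner z (A (Q x)) = cinner (Q z) (A x)" for x z
    using comm adj_commute_iff[OF Q] by blast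
  then have "cinner z (A (x - Q x)) = cinner (z - Q z) (A x)" for x z
    by (simp add: bounded_op_diff[OF A] cinner_diff_right cinner_diff_left)
  then show ?thesis
    using adj_commute_iff[OF bounded_op_diff_fun[OF bounded_op_ident Q]] by blast
qed

text \<open>If \<open>T\<close> is an \<open>A\<close>-best approximation onto \<open>S\<close> and \<open>P\<close> the orthogonal projection onto \<open>S\<close>,
  then \<open>T + P - T P\<close> is an idempotent onto \<open>S\<close> with the same residuals as \<open>T\<close> on \<open>I - P\<close>.\<close>

lemma PiSet_imp_compatible:
  fixes T :: "'a::chilbert_space \<Rightarrow> 'a"
  assumes A: "positive_op A" and cl: "closed S" and S: "csubspace S" and T: "T \<in> PiSet A S"
  shows "compatible A S"
proof -
  have bT: "bounded_op T" and TS: "\<And>x. T x \<in> S"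
    and orth: "\<And>y s. s \<in> S \<Longrightarrow> cinner (A (y - T y)) s = 0"
    using T PiSet_iff_orthogonal[OF A S] by blast+
  define Q where "Q x = T x + (proj S x - T (proj S x))" for x
  have bQ: "bounded_op Q" unfolding Q_def
    using bounded_op_compose[OF bT bounded_op_proj[OF cl S]]
    by (intro bounded_op_add_fun[OF bT] bounded_op_diff_fun[OF bounded_op_proj[OF cl S]])
  have QS: "Q x \<in> S" for x
    unfolding Q_def using TS proj_in[OF cl S] by (intro csubspace_add[OF S] csubspace_diff[OF S]) auto
  have Qfix: "s \<in> S \<Longrightarrow> Q s = s" for s unfolding Q_def by (simp add: proj_fixes[OF cl S])
  note idem = idempotent_onto(1)[OF QS Qfix] and range_Q = idempotent_onto(2)[OF QS Qfix]
  have residual: "y - Q y = (y - proj S y) - T (y - proj S y)" for y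
    unfolding Q_def by (simp add: bounded_op_diff[OF bT])
  have "cinner (A (y - Q y)) s = 0" if "s \<in> S" for y s
    unfolding residual by (rule orth[OF that])
  then have "\<forall>y. \<forall>s\<in>range Q. cinner (A (y - Q y)) s = 0" by (simp add: range_Q)
  then have "A \<circ> Q = adj Q \<circ> A" using adj_commute_iff_orthogonal[OF A bQ idem] by blast
  then show ?thesis unfolding compatible_def using bQ idem range_Q by blast
qed

section \<open>Inner inverses\<close>

lemma inner_inverse_range_idempotent:
  assumes B: "bounded_op B" and C: "bounded_op C" and BCB: "B \<circ> C \<circ> B = B"
  shows "bounded_op (B \<circ> C)" "(B \<circ> C) \<circ> (B \<circ> C) = B \<circ> C" "range (B \<circ> C) = range B"
proof -
  have "B (C (B x)) = B x" for x using BCB by (simp add: fun_eq_iff)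
  then have fixed: "(B \<circ> C) s = s" if "s \<in> range B" for s using that by auto
  have into: "(B \<circ> C) x \<in> range B" for x by simp
  show "(B \<circ> C) \<circ> (B \<circ> C) = B \<circ> C" by (rule idempotent_onto(1)[OF into fixed])
  show "range (B \<circ> C) = range B" by (rule idempotent_onto(2)[OF into fixed])
  show "bounded_op (B \<circ> C)" using bounded_op_compose[OF B C] by (simp add: o_def)
qed

lemma inner_inverse_kernel_idempotent:
  assumes B: "bounded_op B" and C: "bounded_op C" and BCB: "B \<circ> C \<circ> B = B"
  defines "Q \<equiv> \<lambda>x. x - C (B x)"
  shows "bounded_op Q" "Q \<circ> Q = Q" "range Q = ker B"
proof -
  have into: "Q x \<in> ker B" for x using BCB by (simp add: ker_def Q_def fun_eq_iff bounded_op_diff[OF B])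
  have fixed: "s \<in> ker B \<Longrightarrow> Q s = s" for s by (simp add: ker_def Q_def bounded_op_0[OF C])
  show "Q \<circ> Q = Q" by (rule idempotent_onto(1)[OF into fixed])
  show "range Q = ker B" by (rule idempotent_onto(2)[OF into fixed])
  show "bounded_op Q"
    unfolding Q_def by (rule bounded_op_diff_fun[OF bounded_op_ident bounded_op_compose[OF C B]])
qed

lemma weighted_inverse_imp_compatible_PiSet:
  fixes A1 A2 B C :: "'a::chilbert_space \<Rightarrow> 'a"
  assumes A1: "positive_op A1" and A2: "positive_op A2"
    and B: "bounded_op B" and C: "bounded_op C" and BCB: "B \<circ> C \<circ> B = B"
    and comm1: "A1 \<circ> (B \<circ> C) = adj (B \<circ> C) \<circ> A1"
    and comm2: "A2 \<circ> (C \<circ> B) = adj (C \<circ> B) \<circ> A2"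
  shows "compatible A1 (range B) \<and> compatible A2 (ker B)
    \<and> B \<circ> C \<in> PiSet A1 (range B) \<and> (\<lambda>x. x - C (B x)) \<in> PiSet A2 (ker B)"
proof -
  note Q1 = inner_inverse_range_idempotent[OF B C BCB]
  note Q2 = inner_inverse_kernel_idempotent[OF B C BCB]
  have "A2 \<circ> (\<lambda>x. x - (C \<circ> B) x) = adj (\<lambda>x. x - (C \<circ> B) x) \<circ> A2"
    using A2 bounded_op_compose[OF C B] comm2
    by (intro adj_commute_complement) (simp_all add: positive_op_def o_def)
  then have comm2': "A2 \<circ> (\<lambda>x. x - C (B x)) = adj (\<lambda>x. x - C (B x)) \<circ> A2" by (simp add: o_def)
  show ?thesis
    using idempotent_PiSet_iff_adj_commute[OF A1 Q1(1,2)] idempotent_PiSet_iff_adj_commute[OF A2 Q2(1,2)]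
      Q1 Q2 comm1 comm2' unfolding compatible_def by metis
qed

text \<open>\<open>F (x, z) = B x + (z - P z)\<close>, with \<open>P\<close> the projection onto \<open>R(B)\<close>, is onto the whole space,
  so the open mapping theorem applies without treating \<open>R(B)\<close> as a Banach space of its own.\<close>

lemma closed_range_bounded_preimage:
  fixes B :: "'a::chilbert_space \<Rightarrow> 'a"
  assumes B: "bounded_op B" and cl: "closed (range B)"
  shows "\<exists>c>0. \<forall>x. \<exists>x'. B x' = B x \<and> norm x' \<le> c * norm (B x)"
proof -
  note sR = csubspace_range[OF B]
  define P where "P = proj (range B)"
  have bP: "bounded_op P" unfolding P_def by (rule bounded_op_proj[OF cl sR])
  have Pfix: "P (B x) = B x" for x unfolding P_def by (simp add: proj_fixes[OF cl sR])
  have P_residual: "P (z - P z) = 0" for z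
    unfolding P_def by (rule proj_unique[OF cl sR csubspace_0[OF sR]]) (simp add: proj_orthogonal[OF cl sR])
  define F where "F p = B (fst p) + (snd p - P (snd p))" for p :: "'a \<times> 'a"
  have "bounded_linear (\<lambda>p. B (fst p))" "bounded_linear (\<lambda>p. P (snd p))"
    using bounded_linear_compose[OF bounded_op_bounded_linear[OF B] bounded_linear_fst]
      bounded_linear_compose[OF bounded_op_bounded_linear[OF bP] bounded_linear_snd]
    by (simp_all add: o_def)
  then have "bounded_linear F"
    unfolding F_def by (intro bounded_linear_add bounded_linear_sub bounded_linear_snd)
  moreover have "y \<in> range F" for y
  proof -
    have "P y \<in> range B" unfolding P_def by (rule proj_in[OF cl sR])
    then obtain x where "P y = B x" by blast
    then have "F (x, y) = y" by (simp add: F_def)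
    then show ?thesis by (metis rangeI)
  qed
  then have "surj F" by blast
  ultimately obtain c where c: "c > 0" and pre: "\<And>y. \<exists>p. F p = y \<and> norm p \<le> c * norm y"
    using open_mapping_theorem by blast
  have "\<exists>x'. B x' = B x \<and> norm x' \<le> c * norm (B x)" for x
  proof -
    obtain p where p: "F p = B x" "norm p \<le> c * norm (B x)" using pre by blast
    have "P (F p) = B (fst p)" by (simp add: F_def bounded_op_add[OF bP] Pfix P_residual)
    then have "B (fst p) = B x" using p(1) Pfix by simp
    moreover have "norm (fst p) \<le> c * norm (B x)" using norm_fst_le[of "fst p" "snd p"] p(2) by simp
    ultimately show ?thesis by blast
  qed
  then show ?thesis using c by blast
qed

lemma bounded_inner_inverse_exists:
  fixes B :: "'a::chilbert_space \<Rightarrow> 'a"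
  assumes B: "bounded_op B" and cl: "closed (range B)"
  shows "\<exists>D. bounded_op D \<and> (\<forall>x. B (D (B x)) = B x)"
proof -
  obtain c where c: "c > 0" and pre: "\<And>x. \<exists>x'. B x' = B x \<and> norm x' \<le> c * norm (B x)"
    using closed_range_bounded_preimage[OF B cl] by blast
  note sR = csubspace_range[OF B] and sN = csubspace_ker[OF B] and cN = closed_ker[OF B]
  define P where "P = proj (range B)"
  define N where "N = proj (ker B)"
  have bP: "bounded_op P" and bN: "bounded_op N"
    unfolding P_def N_def by (rule bounded_op_proj[OF cl sR], rule bounded_op_proj[OF cN sN])
  have preP: "\<exists>x. B x = P y \<and> norm x \<le> c * norm y" for y
  proof -
    obtain x where "P y = B x" using proj_in[OF cl sR, of y] unfolding P_def by blast
    then obtain x' where "B x' = P y" "norm x' \<le> c * norm (P y)" using pre[of x] by auto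
    moreover have "c * norm (P y) \<le> c * norm y"
      using norm_proj_le[OF cl sR, of y] c unfolding P_def by simp
    ultimately show ?thesis by force
  qed
  text \<open>Subtracting the kernel component makes the choice of preimage irrelevant.\<close>
  define D where "D y = (SOME x. B x = P y) - N (SOME x. B x = P y)" for y
  have D_eq: "D y = x - N x" if x: "B x = P y" for x y
  proof -
    define x0 where "x0 = (SOME x. B x = P y)"
    have "B x0 = P y" unfolding x0_def using x by (rule someI)
    then have "x0 - x \<in> ker B" using x by (simp add: ker_def bounded_op_diff[OF B])
    then have "N (x0 - x) = x0 - x" unfolding N_def by (rule proj_fixes[OF cN sN])
    then have "x0 - N x0 = x - N x" by (simp add: bounded_op_diff[OF bN] algebra_simps)
    then show ?thesis unfolding D_def x0_def by simp
  qed
  have "D (y1 + y2) = D y1 + D y2" for y1 y2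
  proof -
    obtain x1 x2 where x: "B x1 = P y1" "B x2 = P y2" using preP by meson
    then have "B (x1 + x2) = P (y1 + y2)" by (simp add: bounded_op_add[OF B] bounded_op_add[OF bP])
    then show ?thesis using D_eq[OF x(1)] D_eq[OF x(2)] by (simp add: D_eq bounded_op_add[OF bN])
  qed
  moreover have "D (cscale a y) = cscale a (D y)" for a y
  proof -
    obtain x where x: "B x = P y" using preP by blast
    then have "B (cscale a x) = P (cscale a y)" by (simp add: bounded_op_cscale[OF B] bounded_op_cscale[OF bP])
    then show ?thesis using D_eq[OF x] by (simp add: D_eq bounded_op_cscale[OF bN] cscale_diff_right)
  qed
  moreover have "norm (D y) \<le> norm y * c" for y
  proof -
    obtain x where x: "B x = P y" "norm x \<le> c * norm y" using preP by blast
    have "norm (D y) \<le> norm x"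
      using D_eq[OF x(1)] norm_diff_proj_le[OF cN sN, of x] unfolding N_def by simp
    then show ?thesis using x(2) by (simp add: mult.commute)
  qed
  ultimately have "bounded_op D" unfolding bounded_op_def by blast
  moreover have "B (D (B x)) = B x" for x
  proof -
    obtain x' where x': "B x' = P (B x)" using preP by blast
    have "N x' \<in> ker B" unfolding N_def by (rule proj_in[OF cN sN])
    then have "B (D (B x)) = P (B x)" using D_eq[OF x'] x' by (simp add: ker_def bounded_op_diff[OF B])
    then show ?thesis unfolding P_def by (simp add: proj_fixes[OF cl sR])
  qed
  ultimately show ?thesis by blast
qed

text \<open>With compatible idempotents \<open>Q\<^sub>1\<close> onto \<open>R(B)\<close>, \<open>Q\<^sub>2\<close> onto \<open>N(B)\<close> and a bounded inner inverse \<open>D\<close>,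
  the weighted inverse is \<open>C = (I - Q\<^sub>2) D Q\<^sub>1\<close>: then \<open>B C = Q\<^sub>1\<close> and \<open>C B = I - Q\<^sub>2\<close>.\<close>

lemma compatible_imp_weighted_inverse:
  fixes A1 A2 B :: "'a::chilbert_space \<Rightarrow> 'a"
  assumes A2: "positive_op A2" and B: "bounded_op B" and cl: "closed (range B)"
    and compat1: "compatible A1 (range B)" and compat2: "compatible A2 (ker B)"
  shows "\<exists>C. bounded_op C \<and> B \<circ> C \<circ> B = B \<and> C \<circ> B \<circ> C = C
           \<and> A1 \<circ> (B \<circ> C) = adj (B \<circ> C) \<circ> A1
           \<and> A2 \<circ> (C \<circ> B) = adj (C \<circ> B) \<circ> A2"
proof -
  obtain Q1 where bQ1: "bounded_op Q1" and idem1: "Q1 \<circ> Q1 = Q1" and range1: "range Q1 = range B"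
    and comm1: "A1 \<circ> Q1 = adj Q1 \<circ> A1" using compat1 unfolding compatible_def by blast
  obtain Q2 where bQ2: "bounded_op Q2" and idem2: "Q2 \<circ> Q2 = Q2" and range2: "range Q2 = ker B"
    and comm2: "A2 \<circ> Q2 = adj Q2 \<circ> A2" using compat2 unfolding compatible_def by blast
  obtain D where bD: "bounded_op D" and BDB: "\<And>x. B (D (B x)) = B x"
    using bounded_inner_inverse_exists[OF B cl] by blast
  have Q1B: "Q1 (B x) = B x" for x using idempotent_fixes_range[OF idem1] range1 by simp
  have BQ2: "B (Q2 v) = 0" for v using range2 unfolding ker_def by blast
  have Q2ker: "B n = 0 \<Longrightarrow> Q2 n = n" for n using idempotent_fixes_range[OF idem2] range2 by (simp add: ker_def)
  define C where "C y = D (Q1 y) - Q2 (D (Q1 y))" for y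
  have bC: "bounded_op C"
    unfolding C_def using bounded_op_compose[OF bD bQ1] bounded_op_compose[OF bQ2 bounded_op_compose[OF bD bQ1]]
    by (rule bounded_op_diff_fun)
  have BC: "B (C y) = Q1 y" for y
  proof -
    obtain x where x: "Q1 y = B x" using range1 by blast
    show ?thesis unfolding C_def using BQ2 BDB[of x] x by (simp add: bounded_op_diff[OF B])
  qed
  have CB: "C (B x) = x - Q2 x" for x
  proof -
    have "B (D (B x) - x) = 0" by (simp add: bounded_op_diff[OF B] BDB)
    then have "Q2 (D (B x) - x) = D (B x) - x" by (rule Q2ker)
    then show ?thesis unfolding C_def by (simp add: Q1B bounded_op_diff[OF bQ2] algebra_simps)
  qed
  have Q2C: "Q2 (C y) = 0" for y
    using idem2 unfolding C_def by (simp add: bounded_op_diff[OF bQ2] fun_eq_iff)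
  have CQ1: "C (Q1 y) = C y" for y using idem1 unfolding C_def by (simp add: fun_eq_iff)
  have "B \<circ> C = Q1" "C \<circ> B = (\<lambda>x. x - Q2 x)" by (simp_all add: fun_eq_iff BC CB)
  moreover have "A2 \<circ> (\<lambda>x. x - Q2 x) = adj (\<lambda>x. x - Q2 x) \<circ> A2"
    using A2 by (intro adj_commute_complement[OF _ bQ2 comm2]) (simp add: positive_op_def)
  moreover have "B \<circ> C \<circ> B = B" "C \<circ> B \<circ> C = C"
    by (simp_all add: fun_eq_iff BC Q1B CB Q2C CQ1 BQ2 bounded_op_diff[OF B])
  ultimately show ?thesis using bC comm1 by metis
qed

theorem mainTheorem19:
  fixes A1 A2 B :: "'a::chilbert_space \<Rightarrow> 'a"
  assumes "separable_space TYPE('a)"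
    and "positive_op A1" and "positive_op A2"
    and "bounded_op B" and "closed (range B)"
  shows "((\<exists>G. bounded_op G \<and> B \<circ> G \<in> PiSet A1 (range B)
                \<and> (\<lambda>x. x - G (B x)) \<in> PiSet A2 (ker B))
          \<longleftrightarrow> (compatible A1 (range B) \<and> compatible A2 (ker B)))
       \<and> ((compatible A1 (range B) \<and> compatible A2 (ker B))
          \<longleftrightarrow> (\<exists>C. bounded_op C \<and> B \<circ> C \<circ> B = B \<and> C \<circ> B \<circ> C = C
                \<and> A1 \<circ> (B \<circ> C) = adj (B \<circ> C) \<circ> A1
                \<and> A2 \<circ> (C \<circ> B) = adj (C \<circ> B) \<circ> A2))"
proof -
  note A1 = assms(2) and A2 = assms(3) and B = assms(4) and cl = assms(5)
  let ?compat = "compatible A1 (range B) \<and> compatible A2 (ker B)"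
  have one_imp_two: ?compat
    if "B \<circ> G \<in> PiSet A1 (range B)" "(\<lambda>x. x - G (B x)) \<in> PiSet A2 (ker B)" for G
    using PiSet_imp_compatible[OF A1 cl csubspace_range[OF B] that(1)]
      PiSet_imp_compatible[OF A2 closed_ker[OF B] csubspace_ker[OF B] that(2)] by blast
  have three_imp_one_two: "compatible A1 (range B) \<and> compatible A2 (ker B) \<and> B \<circ> C \<in> PiSet A1 (range B) \<and> (\<lambda>x. x - C (B x)) \<in> PiSet A2 (ker B)"
    if "bounded_op C" "B \<circ> C \<circ> B = B"
      "A1 \<circ> (B \<circ> C) = adj (B \<circ> C) \<circ> A1" "A2 \<circ> (C \<circ> B) = adj (C \<circ> B) \<circ> A2" for C
    by (rule weighted_inverse_imp_compatible_PiSet[OF A1 A2 B that])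
  have two_imp_three: "?compat \<Longrightarrow> \<exists>C. bounded_op C \<and> B \<circ> C \<circ> B = B \<and> C \<circ> B \<circ> C = C
           \<and> A1 \<circ> (B \<circ> C) = adj (B \<circ> C) \<circ> A1 \<and> A2 \<circ> (C \<circ> B) = adj (C \<circ> B) \<circ> A2"
    using compatible_imp_weighted_inverse[OF A2 B cl] by blast
  show ?thesis using one_imp_two three_imp_one_two two_imp_three by meson
qed

end
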